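(* Let $\mathcal{E}$ be a quantum channel on $\mathbb{C}^d$, $M \ge 2$ and $N \ge 2$ integers. Let $\hat V_1,\dots,\hat V_M$ be i.i.d. from a unitary $4$-design on $\mathbb{C}^d$, $|\psi_i\rangle = \hat V_i|0\rangle$, $f_i := f_{\mathcal{E}}(\psi_i)$, and, conditional on $\psi_i$, let $X_{i,1},\dots,X_{i,N}\in\{0,1\}$ be i.i.d. Bernoulli($f_i$), with the data for different $i$ independent. Let $\hat F = \frac{1}{MN}\sum_{i=1}^M\sum_{s=1}^N X_{i,s}$. Then $$\mathrm{Var}(\hat F) = \frac{D^2}{M} + \frac{1}{MN}\left(F - \int d\psi\, f_{\mathcal{E}}(\psi)^2\right),$$ and in particular $\mathrm{Var}(\hat F) \le \frac{D^2}{M} + \frac{1}{4MN}$.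
   Context: $f_{\mathcal{E}}(\psi) := \langle\psi|\mathcal{E}(|\psi\rangle\langle\psi|)|\psi\rangle$. With $d\psi$ the Haar-induced probability measure on unit vectors of $\mathbb{C}^d$, $F := \int d\psi\, f_{\mathcal{E}}(\psi)$ and $D^2 := \int d\psi\, f_{\mathcal{E}}(\psi)^2 - F^2$. $|0\rangle$ is a fixed unit vector. A unitary $t$-design is a probability distribution on $U(d)$ such that for all $k\le t$ and all operators $\hat O$ on $(\mathbb{C}^d)^{\otimes k}$, $\mathbb{E}[\hat V^{\otimes k}\hat O\hat V^{\dagger\otimes k}] = \int \hat U^{\otimes k}\hat O\hat U^{\dagger\otimes k}\,d\hat U$ with $d\hat U$ the Haar measure. *)

theory Defs
  imports "HOL-Analysis.Analysis" "HOL-Probability.Probability"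
begin

text \<open>Matrices on C^d are complex^'d^'d (d = CARD('d)), vectors are complex^'d.\<close>

definition adj :: "complex^'d^'d \<Rightarrow> complex^'d^'d" where
  "adj A = (\<chi> i j. cnj (A $ j $ i))"

definition is_unitary :: "complex^'d^'d \<Rightarrow> bool" where
  "is_unitary U \<longleftrightarrow> U ** adj U = mat 1 \<and> adj U ** U = mat 1"

definition msmult :: "complex \<Rightarrow> complex^'d^'d \<Rightarrow> complex^'d^'d" where
  "msmult c A = (\<chi> i j. c * A $ i $ j)"

definition sesq :: "complex^'d \<Rightarrow> complex^'d^'d \<Rightarrow> complex^'d \<Rightarrow> complex" where
  "sesq w A v = (\<Sum>i\<in>UNIV. cnj (w $ i) * (A *v v) $ i)"

definition nonneg_c :: "complex \<Rightarrow> bool" where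
  "nonneg_c z \<longleftrightarrow> Im z = 0 \<and> 0 \<le> Re z"

text \<open>Positive semidefiniteness of the dk x dk block matrix with d x d blocks X a b (a,b<k),
  i.e. of the operator sum_{a,b} X a b \<otimes> |a><b| on C^d \<otimes> C^k.\<close>
definition block_psd :: "nat \<Rightarrow> (nat \<Rightarrow> nat \<Rightarrow> complex^'d^'d) \<Rightarrow> bool" where
  "block_psd k X \<longleftrightarrow>
     (\<forall>w :: nat \<Rightarrow> complex^'d. nonneg_c (\<Sum>a<k. \<Sum>b<k. sesq (w a) (X a b) (w b)))"

text \<open>Quantum channel = complex-linear, completely positive, trace-preserving map.
  (E \<otimes> id_k) maps sum_{a,b} X a b \<otimes> |a><b| to sum_{a,b} E (X a b) \<otimes> |a><b|.\<close>
definition quantum_channel :: "(complex^'d^'d \<Rightarrow> complex^'d^'d) \<Rightarrow> bool" where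
  "quantum_channel E \<longleftrightarrow>
     (\<forall>A B. E (A + B) = E A + E B) \<and> (\<forall>c A. E (msmult c A) = msmult c (E A)) \<and>
     (\<forall>k X. block_psd k X \<longrightarrow> block_psd k (\<lambda>a b. E (X a b))) \<and>
     (\<forall>A. trace (E A) = trace A)"

definition ketbra :: "complex^'d \<Rightarrow> complex^'d^'d" where
  "ketbra \<psi> = (\<chi> i j. \<psi> $ i * cnj (\<psi> $ j))"

text \<open>f_E(psi) = <psi| E(|psi><psi|) |psi> (real for a channel; we take the real part)\<close>
definition fid :: "(complex^'d^'d \<Rightarrow> complex^'d^'d) \<Rightarrow> complex^'d \<Rightarrow> real" where
  "fid E \<psi> = Re (sesq \<psi> (E (ketbra \<psi>)) \<psi>)"

text \<open>Haar measure on U(d): a (left-invariant) Borel probability measure concentrated on U(d).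
  It is unique, so assuming these properties of a parameter H pins down the Haar measure.\<close>
definition is_haar :: "(complex^'d^'d) measure \<Rightarrow> bool" where
  "is_haar H \<longleftrightarrow> prob_space H \<and> sets H = sets borel \<and> emeasure H {U. is_unitary U} = 1 \<and>
     (\<forall>W. is_unitary W \<longrightarrow> distr H borel (\<lambda>U. W ** U) = H)"

definition state_measure :: "(complex^'d^'d) measure \<Rightarrow> complex^'d \<Rightarrow> (complex^'d) measure" where
  "state_measure H z0 = distr H borel (\<lambda>U. U *v z0)"

text \<open>Tuples (i_0,...,i_{k-1}) indexing the standard basis of (C^d)^{\<otimes>k}.\<close>
definition tuples :: "nat \<Rightarrow> (nat \<Rightarrow> 'd::finite) set" where
  "tuples k = (\<Pi>\<^sub>E l\<in>{..<k}. UNIV)"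

text \<open>Matrix entry (i,j) of V^{\<otimes>k} O V^{\<dagger>\<otimes>k}, Op given by its matrix entries Op a b.\<close>
definition tconj :: "nat \<Rightarrow> complex^'d^'d \<Rightarrow> ((nat \<Rightarrow> 'd) \<Rightarrow> (nat \<Rightarrow> 'd) \<Rightarrow> complex)
      \<Rightarrow> (nat \<Rightarrow> 'd) \<Rightarrow> (nat \<Rightarrow> 'd) \<Rightarrow> complex" where
  "tconj k V Op i j = (\<Sum>a\<in>tuples k. \<Sum>b\<in>tuples k.
      (\<Prod>l<k. V $ i l $ a l) * Op a b * (\<Prod>l<k. cnj (V $ j l $ b l)))"

definition unitary_design :: "nat \<Rightarrow> (complex^'d^'d) measure \<Rightarrow> (complex^'d^'d) measure \<Rightarrow> bool" where
  "unitary_design t H \<nu> \<longleftrightarrow> prob_space \<nu> \<and> sets \<nu> = sets borel \<and> emeasure \<nu> {U. is_unitary U} = 1 \<and>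
     (\<forall>k\<le>t. \<forall>Op. \<forall>i\<in>tuples k. \<forall>j\<in>tuples k.
        (\<integral>V. tconj k V Op i j \<partial>\<nu>) = (\<integral>U. tconj k U Op i j \<partial>H))"

definition block_space :: "nat \<Rightarrow> ((complex^'d^'d) \<times> (nat \<Rightarrow> bool)) measure" where
  "block_space N = (borel :: (complex^'d^'d) measure) \<Otimes>\<^sub>M (\<Pi>\<^sub>M s\<in>{..<N}. count_space UNIV)"

definition block_law :: "(complex^'d^'d \<Rightarrow> complex^'d^'d) \<Rightarrow> complex^'d \<Rightarrow> nat \<Rightarrow>
     (complex^'d^'d) measure \<Rightarrow> ((complex^'d^'d) \<times> (nat \<Rightarrow> bool)) measure" where
  "block_law E z0 N \<nu> = \<nu> \<bind> (\<lambda>V. distr (\<Pi>\<^sub>M s\<in>{..<N}. measure_pmf (bernoulli_pmf (fid E (V *v z0))))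
                                        (block_space N) (\<lambda>X. (V, X)))"

definition data_law :: "(complex^'d^'d \<Rightarrow> complex^'d^'d) \<Rightarrow> complex^'d \<Rightarrow> nat \<Rightarrow> nat \<Rightarrow>
     (complex^'d^'d) measure \<Rightarrow> (nat \<Rightarrow> (complex^'d^'d) \<times> (nat \<Rightarrow> bool)) measure" where
  "data_law E z0 M N \<nu> = (\<Pi>\<^sub>M i\<in>{..<M}. block_law E z0 N \<nu>)"

definition Fhat :: "nat \<Rightarrow> nat \<Rightarrow> (nat \<Rightarrow> (complex^'d^'d) \<times> (nat \<Rightarrow> bool)) \<Rightarrow> real" where
  "Fhat M N \<omega> = (1 / (real M * real N)) * (\<Sum>i<M. \<Sum>s<N. of_bool (snd (\<omega> i) s))"

end

theory Submission
  imports Defs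
begin

text \<open>Conditionally on the sampled states, the block counts \<open>Y\<^sub>i = \<Sum>\<^sub>s X\<^sub>i\<^sub>s\<close> are i.i.d.
  with \<open>E[Y | V] = N f\<close> and \<open>E[Y\<^sup>2 | V] = N f + N (N - 1) f\<^sup>2\<close>, where \<open>f = f\<^sub>E(V|0>)\<close>; complete
  positivity and trace preservation give \<open>0 \<le> f \<le> 1\<close>, so the Bernoulli parameter is never clipped.
  Hence \<open>Var Y = N (F - S) + N\<^sup>2 (S - F\<^sup>2)\<close>, with \<open>F\<close> and \<open>S\<close> the first two moments of \<open>f\<close>
  under the design, and \<open>Var (Fhat M N) = Var Y / (M N\<^sup>2)\<close>. The fidelity \<open>f\<^sub>E(\<psi>)\<close> is the real part of a
  polynomial of degree 2 in \<open>\<psi>\<close> and 2 in its conjugate, and its square that of one of degree 4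
  in each; a unitary 4-design reproduces the Haar averages of such polynomials, so \<open>F\<close> and \<open>S\<close>
  are the Haar moments. Finally \<open>F - S = E[f - f\<^sup>2] \<le> 1/4\<close>.\<close>

section \<open>Unitary matrices and unitary designs\<close>

definition unitary_measure :: "(complex^'d^'d) measure \<Rightarrow> bool" where
  "unitary_measure \<mu> \<longleftrightarrow> prob_space \<mu> \<and> sets \<mu> = sets borel \<and> emeasure \<mu> {U. is_unitary U} = 1"

lemma is_haar_imp_unitary_measure: "is_haar H \<Longrightarrow> unitary_measure H"
  by (simp add: is_haar_def unitary_measure_def)

lemma unitary_design_imp_unitary_measure: "unitary_design t H \<nu> \<Longrightarrow> unitary_measure \<nu>"
  by (simp add: unitary_design_def unitary_measure_def)

lemma AE_is_unitary:
  assumes "unitary_measure \<mu>"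
  shows "AE U in \<mu>. is_unitary U"
proof -
  interpret prob_space \<mu> using assms by (simp add: unitary_measure_def)
  have "prob {U. is_unitary U} = 1" using assms by (simp add: unitary_measure_def measure_def)
  from AE_prob_1[OF this] show ?thesis by simp
qed

lemma sum_cnj_mult_self: "(\<Sum>k\<in>UNIV. cnj (z $ k) * z $ k) = complex_of_real ((norm z)\<^sup>2)"
proof -
  have "(norm z)\<^sup>2 = (\<Sum>k\<in>UNIV. (cmod (z $ k))\<^sup>2)"
    unfolding norm_vec_def L2_set_def by (simp add: sum_nonneg)
  moreover have "\<And>w. cnj w * w = complex_of_real ((cmod w)\<^sup>2)"
    by (simp only: complex_norm_square mult.commute)
  ultimately show ?thesis by simp
qed

lemma unitary_columns_orthonormal:
  fixes V :: "complex^'d^'d"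
  assumes "is_unitary V"
  shows "(\<Sum>r\<in>UNIV. cnj (V $ r $ c) * V $ r $ c') = (if c' = c then 1 else 0)"
proof -
  have "(adj V ** V) $ c $ c' = mat 1 $ c $ c'" using assms unfolding is_unitary_def by simp
  then show ?thesis by (auto simp: matrix_matrix_mult_def adj_def mat_def)
qed

lemma norm_unitary_mult:
  fixes V :: "complex^'d^'d"
  assumes "is_unitary V"
  shows "norm (V *v z) = norm z"
proof -
  have "(\<Sum>k\<in>UNIV. cnj ((V *v z) $ k) * (V *v z) $ k)
      = (\<Sum>k\<in>UNIV. \<Sum>c\<in>UNIV. \<Sum>c'\<in>UNIV. cnj (z $ c) * z $ c' * (cnj (V $ k $ c) * V $ k $ c'))"
    unfolding matrix_vector_mult_def vec_lambda_beta cnj_sum sum_product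
    by (intro sum.cong refl) (simp add: ac_simps)
  also have "\<dots> = (\<Sum>c\<in>UNIV. \<Sum>c'\<in>UNIV. \<Sum>k\<in>UNIV. cnj (z $ c) * z $ c' * (cnj (V $ k $ c) * V $ k $ c'))"
    by (subst sum.swap) (intro sum.cong refl sum.swap)
  also have "\<dots> = (\<Sum>c\<in>UNIV. \<Sum>c'\<in>UNIV. cnj (z $ c) * z $ c' * (\<Sum>k\<in>UNIV. cnj (V $ k $ c) * V $ k $ c'))"
    by (simp only: sum_distrib_left)
  also have "\<dots> = (\<Sum>k\<in>UNIV. cnj (z $ k) * z $ k)"
    by (simp add: unitary_columns_orthonormal[OF assms] if_distrib[where f="\<lambda>x. _ * x"] cong: if_cong)
  finally have "complex_of_real ((norm (V *v z))\<^sup>2) = complex_of_real ((norm z)\<^sup>2)"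
    by (simp only: sum_cnj_mult_self)
  then have "(norm (V *v z))\<^sup>2 = (norm z)\<^sup>2"
    using of_real_eq_iff by blast
  then show ?thesis by (simp add: power2_eq_iff_nonneg)
qed

definition bimonomial :: "nat \<Rightarrow> (nat \<Rightarrow> 'd) \<Rightarrow> (nat \<Rightarrow> 'd) \<Rightarrow> complex^'d \<Rightarrow> complex" where
  "bimonomial k i j \<psi> = (\<Prod>l<k. \<psi> $ i l) * (\<Prod>l<k. cnj (\<psi> $ j l))"

text \<open>Polynomials of degree \<open>k\<close> in the coordinates of \<open>\<psi>\<close> and degree \<open>k\<close> in their conjugates;
  a unitary \<open>k\<close>-design reproduces their Haar averages over \<open>V z\<close>.\<close>
inductive bihomogeneous :: "nat \<Rightarrow> (complex^'d \<Rightarrow> complex) \<Rightarrow> bool" where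
  bimonomial: "bihomogeneous k (bimonomial k i j)"
| zero: "bihomogeneous k (\<lambda>_. 0)"
| add: "bihomogeneous k f \<Longrightarrow> bihomogeneous k g \<Longrightarrow> bihomogeneous k (\<lambda>\<psi>. f \<psi> + g \<psi>)"
| cmult: "bihomogeneous k f \<Longrightarrow> bihomogeneous k (\<lambda>\<psi>. c * f \<psi>)"

definition tuple_append :: "nat \<Rightarrow> (nat \<Rightarrow> 'a) \<Rightarrow> (nat \<Rightarrow> 'a) \<Rightarrow> nat \<Rightarrow> 'a" where
  "tuple_append a x y = (\<lambda>l. if l < a then x l else y (l - a))"

lemma prod_lessThan_add:
  fixes f :: "nat \<Rightarrow> 'a::comm_monoid_mult"
  shows "(\<Prod>l<a + b. f l) = (\<Prod>l<a. f l) * (\<Prod>l<b. f (a + l))"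
  by (induction b) (auto simp: ac_simps)

lemma bimonomial_mult:
  "bimonomial a i j \<psi> * bimonomial b i' j' \<psi> =
     bimonomial (a + b) (tuple_append a i i') (tuple_append a j j') \<psi>"
  unfolding bimonomial_def prod_lessThan_add tuple_append_def by (simp add: ac_simps)

lemma bihomogeneous_sum:
  "finite S \<Longrightarrow> (\<And>s. s \<in> S \<Longrightarrow> bihomogeneous k (f s)) \<Longrightarrow> bihomogeneous k (\<lambda>\<psi>. \<Sum>s\<in>S. f s \<psi>)"
  by (induction S rule: finite_induct) (auto intro: bihomogeneous.intros)

lemma bihomogeneous_mult_bimonomial:
  "bihomogeneous a f \<Longrightarrow> bihomogeneous (a + b) (\<lambda>\<psi>. f \<psi> * bimonomial b i j \<psi>)"
proof (induction rule: bihomogeneous.induct)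
  case (bimonomial k i' j')
  then show ?case by (simp add: bimonomial_mult bihomogeneous.bimonomial)
next
  case (zero k)
  then show ?case by (simp add: bihomogeneous.zero)
next
  case (add k f g)
  then show ?case by (simp add: distrib_right bihomogeneous.add)
next
  case (cmult k f c)
  then show ?case using bihomogeneous.cmult[OF cmult.IH, of c] by (simp add: mult.assoc)
qed

lemma bihomogeneous_mult:
  assumes "bihomogeneous a f" "bihomogeneous b g"
  shows "bihomogeneous (a + b) (\<lambda>\<psi>. f \<psi> * g \<psi>)"
  using assms(2)
proof (induction rule: bihomogeneous.induct)
  case (bimonomial k i j)
  from assms(1) show ?case by (rule bihomogeneous_mult_bimonomial)
next
  case (zero k)
  then show ?case by (simp add: bihomogeneous.zero)
next
  case (add k f' g')
  then show ?case by (simp add: distrib_left bihomogeneous.add)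
next
  case (cmult k f' c)
  then show ?case using bihomogeneous.cmult[OF cmult.IH, of c] by (simp add: ac_simps)
qed

lemma bihomogeneous_cnj: "bihomogeneous k f \<Longrightarrow> bihomogeneous k (\<lambda>\<psi>. cnj (f \<psi>))"
proof (induction rule: bihomogeneous.induct)
  case (bimonomial k i j)
  have "(\<lambda>\<psi>. cnj (bimonomial k i j \<psi>)) = bimonomial k j i"
    by (simp add: bimonomial_def fun_eq_iff)
  then show ?case by (simp add: bihomogeneous.bimonomial)
qed (auto intro: bihomogeneous.intros)

lemma continuous_on_bihomogeneous: "bihomogeneous k f \<Longrightarrow> continuous_on A f"
  by (induction rule: bihomogeneous.induct) (auto simp: bimonomial_def intro!: continuous_intros)

lemma tconj_tensor_power_ketbra:
  fixes V :: "complex^'d^'d"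
  assumes "i \<in> tuples k" "j \<in> tuples k"
  shows "tconj k V (\<lambda>a b. (\<Prod>l<k. z $ a l) * (\<Prod>l<k. cnj (z $ b l))) i j = bimonomial k i j (V *v z)"
proof -
  have row: "(\<Sum>a\<in>tuples k. \<Prod>l<k. V $ i l $ a l * z $ a l) = (\<Prod>l<k. (V *v z) $ i l)"
    unfolding tuples_def by (simp add: matrix_vector_mult_def prod_sum_PiE)
  have col: "(\<Sum>b\<in>tuples k. \<Prod>l<k. cnj (V $ j l $ b l) * cnj (z $ b l)) = (\<Prod>l<k. cnj ((V *v z) $ j l))"
    unfolding tuples_def by (simp add: matrix_vector_mult_def prod_sum_PiE)
  have "tconj k V (\<lambda>a b. (\<Prod>l<k. z $ a l) * (\<Prod>l<k. cnj (z $ b l))) i j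
      = (\<Sum>a\<in>tuples k. \<Sum>b\<in>tuples k.
           (\<Prod>l<k. V $ i l $ a l * z $ a l) * (\<Prod>l<k. cnj (V $ j l $ b l) * cnj (z $ b l)))"
    unfolding tconj_def prod.distrib by (intro sum.cong refl) (simp add: algebra_simps)
  also have "\<dots> = bimonomial k i j (V *v z)"
    unfolding sum_product[symmetric] row col bimonomial_def ..
  finally show ?thesis .
qed

lemma bimonomial_restrict: "bimonomial k i j = bimonomial k (restrict i {..<k}) (restrict j {..<k})"
  unfolding bimonomial_def by (intro ext arg_cong2[where f="(*)"] prod.cong) auto

lemma restrict_in_tuples: "restrict i {..<k} \<in> tuples k"
  unfolding tuples_def by auto

lemma integrable_bimonomial:
  assumes "unitary_measure \<mu>"
  shows "integrable \<mu> (\<lambda>V. bimonomial k i j (V *v z))"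
proof -
  interpret prob_space \<mu> using assms by (simp add: unitary_measure_def)
  have bound: "norm (bimonomial k i j (V *v z)) \<le> norm z ^ (2 * k)" if "is_unitary V" for V
  proof -
    have component: "norm ((V *v z) $ m) \<le> norm z" for m
      using Finite_Cartesian_Product.norm_nth_le[of "V *v z" m] norm_unitary_mult[OF that] by simp
    have "norm (bimonomial k i j (V *v z)) = (\<Prod>l<k. norm ((V *v z) $ i l)) * (\<Prod>l<k. norm ((V *v z) $ j l))"
      unfolding bimonomial_def norm_mult prod_norm[symmetric] by simp
    also have "\<dots> \<le> (\<Prod>l<k. norm z) * (\<Prod>l<k. norm z)"
      by (intro mult_mono prod_mono conjI prod_nonneg) (auto simp: component)
    also have "\<dots> = norm z ^ (2 * k)" by (simp add: power_add[symmetric] mult_2)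
    finally show ?thesis .
  qed
  have "(\<lambda>V. bimonomial k i j (V *v z)) \<in> borel_measurable borel"
    unfolding bimonomial_def matrix_vector_mult_def
    by (intro borel_measurable_continuous_onI continuous_intros)
  then have "(\<lambda>V. bimonomial k i j (V *v z)) \<in> borel_measurable \<mu>"
    using assms by (simp add: unitary_measure_def cong: measurable_cong_sets)
  moreover have "AE V in \<mu>. norm (bimonomial k i j (V *v z)) \<le> norm z ^ (2 * k)"
    using AE_is_unitary[OF assms] by eventually_elim (rule bound)
  ultimately show ?thesis by (intro integrable_const_bound)
qed

lemma unitary_design_integral_bihomogeneous:
  assumes design: "unitary_design t H \<nu>" and H: "unitary_measure H"
    and "bihomogeneous k f" "k \<le> t"
  shows "integrable \<nu> (\<lambda>V. f (V *v z)) \<and> integrable H (\<lambda>V. f (V *v z)) \<and>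
         (\<integral>V. f (V *v z) \<partial>\<nu>) = (\<integral>U. f (U *v z) \<partial>H)"
  using assms(3,4)
proof (induction rule: bihomogeneous.induct)
  case (bimonomial k i j)
  let ?i = "restrict i {..<k}" and ?j = "restrict j {..<k}"
  let ?Op = "\<lambda>a b. (\<Prod>l<k. z $ a l) * (\<Prod>l<k. cnj (z $ b l))"
  have "(\<lambda>V. bimonomial k i j (V *v z)) = (\<lambda>V. tconj k V ?Op ?i ?j)"
    by (subst bimonomial_restrict) (simp add: tconj_tensor_power_ketbra restrict_in_tuples)
  then have "(\<integral>V. bimonomial k i j (V *v z) \<partial>\<nu>) = (\<integral>U. bimonomial k i j (U *v z) \<partial>H)"
    using design bimonomial unfolding unitary_design_def by (simp add: restrict_in_tuples)
  then show ?case
    using integrable_bimonomial[OF unitary_design_imp_unitary_measure[OF design]]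
      integrable_bimonomial[OF H] by simp
qed auto

section \<open>The fidelity of a quantum channel\<close>

lemma quantum_channel_zero: "quantum_channel E \<Longrightarrow> E 0 = 0"
  unfolding quantum_channel_def by (metis add_cancel_right_right add_0)

lemma quantum_channel_sum:
  assumes "quantum_channel E" "finite S"
  shows "E (\<Sum>x\<in>S. f x) = (\<Sum>x\<in>S. E (f x))"
  using assms(2)
proof (induction S rule: finite_induct)
  case empty
  then show ?case using quantum_channel_zero[OF assms(1)] by simp
next
  case (insert x F)
  then show ?case using assms(1) unfolding quantum_channel_def by simp
qed

definition matrix_unit :: "'d \<Rightarrow> 'd \<Rightarrow> complex^'d^'d" where
  "matrix_unit a b = (\<chi> i j. if i = a \<and> j = b then 1 else 0)"

lemma ketbra_eq_sum_matrix_unit: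
  "ketbra \<psi> = (\<Sum>a\<in>UNIV. \<Sum>b\<in>UNIV. msmult (\<psi> $ a * cnj (\<psi> $ b)) (matrix_unit a b))"
proof -
  have nest: "(if i = a \<and> j = b then c else 0) = (if i = a then if j = b then c else 0 else 0)"
    for i j a b and c :: complex
    by simp
  have pull: "(\<Sum>x\<in>S. if P then f x else 0) = (if P then \<Sum>x\<in>S. f x else 0)" for S P and f :: "'a \<Rightarrow> complex"
    by simp
  show ?thesis
    by (simp add: nest pull vec_eq_iff ketbra_def sum_component msmult_def matrix_unit_def if_distrib[where f="\<lambda>x. _ * x"]
        cong: if_cong)
qed

definition complex_fid :: "(complex^'d^'d \<Rightarrow> complex^'d^'d) \<Rightarrow> complex^'d \<Rightarrow> complex" where
  "complex_fid E \<psi> = sesq \<psi> (E (ketbra \<psi>)) \<psi>"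

lemma fid_eq_Re_complex_fid: "fid E \<psi> = Re (complex_fid E \<psi>)"
  by (simp add: fid_def complex_fid_def)

lemma complex_fid_expansion:
  assumes "quantum_channel E"
  shows "complex_fid E \<psi> = (\<Sum>i\<in>UNIV. \<Sum>j\<in>UNIV. \<Sum>a\<in>UNIV. \<Sum>b\<in>UNIV.
      E (matrix_unit a b) $ i $ j * (bimonomial 1 (\<lambda>_. a) (\<lambda>_. i) \<psi> * bimonomial 1 (\<lambda>_. j) (\<lambda>_. b) \<psi>))"
proof -
  have "E (ketbra \<psi>) = (\<Sum>a\<in>UNIV. \<Sum>b\<in>UNIV. msmult (\<psi> $ a * cnj (\<psi> $ b)) (E (matrix_unit a b)))"
    using assms unfolding ketbra_eq_sum_matrix_unit by (simp add: quantum_channel_sum quantum_channel_def)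
  then show ?thesis
    by (simp add: complex_fid_def bimonomial_def sesq_def matrix_vector_mult_def sum_component msmult_def
        sum_distrib_left sum_distrib_right ac_simps)
qed

lemma bihomogeneous_complex_fid:
  assumes "quantum_channel E"
  shows "bihomogeneous 2 (complex_fid E)"
proof -
  have "bihomogeneous (1 + 1) (\<lambda>\<psi>. \<Sum>i\<in>UNIV. \<Sum>j\<in>UNIV. \<Sum>a\<in>UNIV. \<Sum>b\<in>UNIV.
      E (matrix_unit a b) $ i $ j * (bimonomial 1 (\<lambda>_. a) (\<lambda>_. i) \<psi> * bimonomial 1 (\<lambda>_. j) (\<lambda>_. b) \<psi>))"
    by (intro bihomogeneous_sum bihomogeneous.cmult bihomogeneous_mult bihomogeneous.bimonomial) simp_all
  then show ?thesis
    by (simp add: complex_fid_expansion[OF assms, abs_def] del: One_nat_def)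
qed

lemma fid_sq_eq_Re_bihomogeneous:
  assumes "quantum_channel E"
  obtains h where "bihomogeneous 4 h" "\<And>\<psi>. (fid E \<psi>)\<^sup>2 = Re (h \<psi>)"
proof
  let ?z = "complex_fid E"
  have "bihomogeneous (2 + 2) (\<lambda>\<psi>. 1 / 2 * (?z \<psi> * ?z \<psi> + ?z \<psi> * cnj (?z \<psi>)))"
    using bihomogeneous_complex_fid[OF assms]
    by (intro bihomogeneous.cmult bihomogeneous.add bihomogeneous_mult bihomogeneous_cnj)
  then show "bihomogeneous 4 (\<lambda>\<psi>. (?z \<psi> * ?z \<psi> + ?z \<psi> * cnj (?z \<psi>)) / 2)"
    by simp
  show "(fid E \<psi>)\<^sup>2 = Re ((?z \<psi> * ?z \<psi> + ?z \<psi> * cnj (?z \<psi>)) / 2)" for \<psi>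
    by (simp add: fid_eq_Re_complex_fid power2_eq_square algebra_simps)
qed

lemma borel_measurable_fid:
  assumes "quantum_channel E"
  shows "fid E \<in> borel_measurable borel"
proof -
  have "continuous_on UNIV (\<lambda>\<psi>. Re (complex_fid E \<psi>))"
    by (intro continuous_intros continuous_on_bihomogeneous[OF bihomogeneous_complex_fid[OF assms]])
  then show ?thesis
    unfolding fid_eq_Re_complex_fid[abs_def] by (rule borel_measurable_continuous_onI)
qed

lemma sesq_ketbra:
  "sesq u (ketbra \<psi>) u = (\<Sum>k\<in>UNIV. cnj (u $ k) * \<psi> $ k) * cnj (\<Sum>k\<in>UNIV. cnj (u $ k) * \<psi> $ k)"
  by (simp add: sesq_def ketbra_def matrix_vector_mult_def sum_distrib_left sum_product ac_simps)
    (rule sum.swap)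

lemma nonneg_c_mult_cnj: "nonneg_c (s * cnj s)"
  by (simp add: nonneg_c_def complex_mult_cnj)

lemma block_psd_ketbra:
  fixes \<psi> :: "complex^'d"
  shows "block_psd 1 (\<lambda>a b. ketbra \<psi>)"
  unfolding block_psd_def
proof
  fix w :: "nat \<Rightarrow> complex^'d"
  have "(\<Sum>a<1. \<Sum>b<1. sesq (w a) (ketbra \<psi>) (w b)) = sesq (w 0) (ketbra \<psi>) (w 0)"
    by simp
  then show "nonneg_c (\<Sum>a<1. \<Sum>b<1. sesq (w a) (ketbra \<psi>) (w b))"
    by (simp only: sesq_ketbra nonneg_c_mult_cnj)
qed

lemma quantum_channel_sesq_ketbra_nonneg:
  assumes "quantum_channel E"
  shows "nonneg_c (sesq u (E (ketbra \<psi>)) u)"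
proof -
  have "block_psd 1 (\<lambda>a b. E (ketbra \<psi>))"
    using assms block_psd_ketbra unfolding quantum_channel_def by blast
  from this[unfolded block_psd_def, THEN spec, of "\<lambda>_. u"] show ?thesis
    by simp
qed

lemma trace_ketbra: "trace (ketbra \<psi>) = complex_of_real ((norm \<psi>)\<^sup>2)"
proof -
  have "trace (ketbra \<psi>) = (\<Sum>k\<in>UNIV. cnj (\<psi> $ k) * \<psi> $ k)"
    by (simp add: trace_def ketbra_def mult.commute)
  then show ?thesis by (simp only: sum_cnj_mult_self)
qed

lemma trace_minus_sesq:
  fixes A :: "complex^'d^'d" and \<psi> :: "complex^'d"
  assumes "norm \<psi> = 1"
  defines "v i \<equiv> \<chi> k. (if k = i then 1 else 0) - \<psi> $ k * cnj (\<psi> $ i)"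
  shows "trace A - sesq \<psi> A \<psi> = (\<Sum>i\<in>UNIV. sesq (v i) A (v i))"
proof -
  have unit: "(\<Sum>k\<in>UNIV. cnj (\<psi> $ k) * \<psi> $ k) = 1"
    using sum_cnj_mult_self[of \<psi>] assms(1) by simp
  have indicator_mult: "(if k = i then 1 else 0) * x = (if k = i then x else 0)"
    "x * (if k = i then 1 else 0) = (if k = i then x else 0)" for k i :: 'd and x :: complex
    by simp_all
  have pull: "(\<Sum>x\<in>S. if P then f x else 0) = (if P then \<Sum>x\<in>S. f x else 0)" for S P and f :: "'d \<Rightarrow> complex"
    by simp
  have cnj_indicator: "cnj (if P then 1 else 0) = (if P then 1 else 0)" for P
    by simp
  have s: "sesq \<psi> A \<psi> = (\<Sum>k\<in>UNIV. \<Sum>l\<in>UNIV. cnj (\<psi> $ k) * A $ k $ l * \<psi> $ l)"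
    by (simp add: sesq_def matrix_vector_mult_def sum_distrib_left mult.assoc)
  have "(\<Sum>i\<in>UNIV. sesq (v i) A (v i))
     = (\<Sum>i\<in>UNIV. \<Sum>k\<in>UNIV. \<Sum>l\<in>UNIV. (if k = i then 1 else 0) * A $ k $ l * (if l = i then 1 else 0))
     - (\<Sum>i\<in>UNIV. \<Sum>k\<in>UNIV. \<Sum>l\<in>UNIV. (if k = i then 1 else 0) * A $ k $ l * (\<psi> $ l * cnj (\<psi> $ i)))
     - (\<Sum>i\<in>UNIV. \<Sum>k\<in>UNIV. \<Sum>l\<in>UNIV. cnj (\<psi> $ k) * \<psi> $ i * A $ k $ l * (if l = i then 1 else 0))
     + (\<Sum>i\<in>UNIV. \<Sum>k\<in>UNIV. \<Sum>l\<in>UNIV. (cnj (\<psi> $ i) * \<psi> $ i) * (cnj (\<psi> $ k) * A $ k $ l * \<psi> $ l))"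
    unfolding v_def
    by (simp add: sesq_def matrix_vector_mult_def sum_distrib_left algebra_simps cnj_indicator)
      (simp add: sum.distrib sum_subtractf)
  also have "(\<Sum>i\<in>UNIV. \<Sum>k\<in>UNIV. \<Sum>l\<in>UNIV. (if k = i then 1 else 0) * A $ k $ l * (if l = i then 1 else 0)) = trace A"
    by (simp add: trace_def indicator_mult pull)
  also have "(\<Sum>i\<in>UNIV. \<Sum>k\<in>UNIV. \<Sum>l\<in>UNIV. (if k = i then 1 else 0) * A $ k $ l * (\<psi> $ l * cnj (\<psi> $ i))) = sesq \<psi> A \<psi>"
    by (simp add: s indicator_mult if_distrib[where f="\<lambda>x. _ * x"] pull ac_simps cong: if_cong)
  also have "(\<Sum>i\<in>UNIV. \<Sum>k\<in>UNIV. \<Sum>l\<in>UNIV. cnj (\<psi> $ k) * \<psi> $ i * A $ k $ l * (if l = i then 1 else 0)) = sesq \<psi> A \<psi>"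
    by (simp add: s indicator_mult) (subst sum.swap, simp add: ac_simps)
  also have "(\<Sum>i\<in>UNIV. \<Sum>k\<in>UNIV. \<Sum>l\<in>UNIV. (cnj (\<psi> $ i) * \<psi> $ i) * (cnj (\<psi> $ k) * A $ k $ l * \<psi> $ l))
      = sesq \<psi> A \<psi>"
    unfolding s sum_distrib_left[symmetric] sum_distrib_right[symmetric] unit by simp
  finally show ?thesis by simp
qed

lemma fid_nonneg: "quantum_channel E \<Longrightarrow> 0 \<le> fid E \<psi>"
  using quantum_channel_sesq_ketbra_nonneg[of E \<psi> \<psi>] by (simp add: fid_def nonneg_c_def)

lemma fid_le_1:
  assumes E: "quantum_channel E" and unit: "norm \<psi> = 1"
  shows "fid E \<psi> \<le> 1"
proof -
  let ?A = "E (ketbra \<psi>)"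
  have "trace ?A = trace (ketbra \<psi>)"
    using E unfolding quantum_channel_def by blast
  then have "trace ?A = 1"
    by (simp add: trace_ketbra unit)
  moreover have "0 \<le> Re (trace ?A - sesq \<psi> ?A \<psi>)"
    unfolding trace_minus_sesq[OF unit] Re_sum
    by (intro sum_nonneg) (use quantum_channel_sesq_ketbra_nonneg[OF E] in \<open>simp add: nonneg_c_def\<close>)
  ultimately show ?thesis by (simp add: fid_def)
qed

lemma unitary_design_integral_Re_bihomogeneous:
  assumes "unitary_design t H \<nu>" "unitary_measure H" "bihomogeneous k h" "k \<le> t"
    and "\<And>\<psi>. f \<psi> = Re (h \<psi>)"
  shows "(\<integral>V. f (V *v z) \<partial>\<nu>) = (\<integral>U. f (U *v z) \<partial>H)"
  using unitary_design_integral_bihomogeneous[OF assms(1-4), of z] by (simp add: assms(5) integral_Re)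

lemma borel_measurable_mult_vec: "(\<lambda>U::complex^'d^'d. U *v z) \<in> borel_measurable borel"
  unfolding matrix_vector_mult_def by (intro borel_measurable_continuous_onI continuous_intros)

lemma borel_measurable_fid_mult_vec:
  fixes \<mu> :: "(complex^'d^'d) measure"
  assumes "quantum_channel E" "sets \<mu> = sets borel"
  shows "(\<lambda>U. fid E (U *v z)) \<in> borel_measurable \<mu>"
proof -
  have "(\<lambda>U. fid E (U *v z)) \<in> borel_measurable borel"
    using borel_measurable_mult_vec borel_measurable_fid[OF assms(1)] by (rule measurable_compose)
  then show ?thesis
    using measurable_cong_sets[OF assms(2) refl] by blast
qed

lemma AE_fid_mult_vec_bounds:
  assumes E: "quantum_channel E" and "unitary_measure \<mu>" "norm z = 1"
  shows "AE U in \<mu>. 0 \<le> fid E (U *v z) \<and> fid E (U *v z) \<le> 1"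
  using AE_is_unitary[OF assms(2)]
  by eventually_elim (simp add: fid_nonneg[OF E] fid_le_1[OF E] norm_unitary_mult assms(3))

lemma
  fixes \<mu> :: "(complex^'d^'d) measure"
  assumes E: "quantum_channel E" and \<mu>: "unitary_measure \<mu>" and z: "norm z = 1"
  shows integrable_fid_mult_vec: "integrable \<mu> (\<lambda>U. fid E (U *v z))"
    and integrable_fid_mult_vec_sq: "integrable \<mu> (\<lambda>U. (fid E (U *v z))\<^sup>2)"
proof -
  interpret prob_space \<mu> using \<mu> by (simp add: unitary_measure_def)
  have f: "(\<lambda>U. fid E (U *v z)) \<in> borel_measurable \<mu>"
    using E \<mu> by (intro borel_measurable_fid_mult_vec) (simp_all add: unitary_measure_def)
  note bounds = AE_fid_mult_vec_bounds[OF E \<mu> z]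
  show "integrable \<mu> (\<lambda>U. fid E (U *v z))"
    using f bounds by (intro integrable_const_bound[where B=1]) auto
  show "integrable \<mu> (\<lambda>U. (fid E (U *v z))\<^sup>2)"
    using f bounds by (intro integrable_const_bound[where B=1]) (auto simp: abs_square_le_1)
qed

lemma integral_state_measure:
  fixes g :: "complex^'d \<Rightarrow> real"
  assumes "sets H = sets borel" "g \<in> borel_measurable borel"
  shows "(\<integral>\<psi>. g \<psi> \<partial>state_measure H z) = (\<integral>U. g (U *v z) \<partial>H)"
proof -
  have "(\<lambda>U. U *v z) \<in> measurable H borel"
    using borel_measurable_mult_vec assms(1) by (simp cong: measurable_cong_sets)
  then show ?thesis
    unfolding state_measure_def using assms(2) by (rule integral_distr)
qed

lemma unitary_design_integral_fid:
  assumes "quantum_channel E" "unitary_design t H \<nu>" "unitary_measure H" "2 \<le> t"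
  shows "(\<integral>V. fid E (V *v z) \<partial>\<nu>) = (\<integral>\<psi>. fid E \<psi> \<partial>state_measure H z)"
proof -
  have "(\<integral>V. fid E (V *v z) \<partial>\<nu>) = (\<integral>U. fid E (U *v z) \<partial>H)"
    using assms(2,3) bihomogeneous_complex_fid[OF assms(1)] assms(4) fid_eq_Re_complex_fid
    by (rule unitary_design_integral_Re_bihomogeneous[where f="fid E"])
  also have "\<dots> = (\<integral>\<psi>. fid E \<psi> \<partial>state_measure H z)"
    using assms(3) borel_measurable_fid[OF assms(1)]
    by (simp add: integral_state_measure unitary_measure_def)
  finally show ?thesis .
qed

lemma unitary_design_integral_fid_sq:
  assumes "quantum_channel E" "unitary_design t H \<nu>" "unitary_measure H" "4 \<le> t"
  shows "(\<integral>V. (fid E (V *v z))\<^sup>2 \<partial>\<nu>) = (\<integral>\<psi>. (fid E \<psi>)\<^sup>2 \<partial>state_measure H z)"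
proof -
  obtain h where "bihomogeneous 4 h" "\<And>\<psi>. (fid E \<psi>)\<^sup>2 = Re (h \<psi>)"
    using fid_sq_eq_Re_bihomogeneous[OF assms(1)] by blast
  with assms(2-4) have "(\<integral>V. (fid E (V *v z))\<^sup>2 \<partial>\<nu>) = (\<integral>U. (fid E (U *v z))\<^sup>2 \<partial>H)"
    by (intro unitary_design_integral_Re_bihomogeneous[where f="\<lambda>\<psi>. (fid E \<psi>)\<^sup>2"])
  also have "\<dots> = (\<integral>\<psi>. (fid E \<psi>)\<^sup>2 \<partial>state_measure H z)"
    using assms(3) borel_measurable_fid[OF assms(1)]
    by (simp add: integral_state_measure unitary_measure_def)
  finally show ?thesis .
qed

section \<open>Sums of i.i.d. random variables\<close>

lemma integral_PiM_component:
  fixes h :: "'a \<Rightarrow> real"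
  assumes "prob_space Q" "i \<in> I" "h \<in> borel_measurable Q"
  shows "(\<integral>x. h (x i) \<partial>PiM I (\<lambda>_. Q)) = (\<integral>y. h y \<partial>Q)"
proof -
  have "distr (PiM I (\<lambda>_. Q)) Q (\<lambda>x. x i) = Q"
    using assms(1,2) by (rule distr_PiM_component)
  moreover have "(\<lambda>x. x i) \<in> measurable (PiM I (\<lambda>_. Q)) Q"
    using assms(2) by simp
  ultimately show ?thesis
    using integral_distr[of "\<lambda>x. x i" "PiM I (\<lambda>_. Q)" Q h] assms(3) by simp
qed

lemma integral_PiM_two_components:
  fixes g h :: "'a \<Rightarrow> real"
  assumes Q: "prob_space Q" and "finite I" "i \<in> I" "j \<in> I" "i \<noteq> j"
    and "integrable Q g" "integrable Q h"
  shows "(\<integral>x. g (x i) * h (x j) \<partial>PiM I (\<lambda>_. Q)) = (\<integral>y. g y \<partial>Q) * (\<integral>y. h y \<partial>Q)"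
proof -
  interpret Q: prob_space Q by fact
  interpret product_prob_space "\<lambda>_. Q" I by unfold_locales
  let ?f = "\<lambda>l. if l = i then g else if l = j then h else (\<lambda>_. 1)"
  have "(\<Prod>l\<in>I. ?f l (x l)) = g (x i) * h (x j)" for x
  proof -
    have "(\<Prod>l\<in>I. ?f l (x l)) = (\<Prod>l\<in>I. if l = i then g (x l) else if l = j then h (x l) else 1)"
      by (intro prod.cong) auto
    also have "\<dots> = g (x i) * h (x j)"
      using assms(2-5) by (simp add: prod.If_cases prod.remove Diff_eq Int_def[symmetric])
    finally show ?thesis .
  qed
  then have "(\<integral>x. g (x i) * h (x j) \<partial>PiM I (\<lambda>_. Q)) = (\<integral>x. (\<Prod>l\<in>I. ?f l (x l)) \<partial>PiM I (\<lambda>_. Q))"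
    by simp
  also have "\<dots> = (\<Prod>l\<in>I. \<integral>y. ?f l y \<partial>Q)"
    using assms(2,6,7) by (intro product_integral_prod) auto
  also have "\<dots> = (\<integral>y. g y \<partial>Q) * (\<integral>y. h y \<partial>Q)"
    using assms(2-5) by (simp add: if_distrib[where f="\<lambda>f. integral\<^sup>L Q f"] Q.prob_space prod.If_cases
        prod.remove Diff_eq Int_def[symmetric] cong: if_cong)
  finally show ?thesis .
qed

lemma sum_integral_PiM_products:
  fixes g :: "'a \<Rightarrow> real"
  assumes Q: "prob_space Q" and I: "finite I" and i: "i \<in> I" and g: "integrable Q g"
  shows "(\<Sum>j\<in>I. \<integral>x. g (x i) * g (x j) \<partial>PiM I (\<lambda>_. Q)) =
           (\<integral>y. (g y)\<^sup>2 \<partial>Q) + (real (card I) - 1) * (\<integral>y. g y \<partial>Q)\<^sup>2"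
proof -
  let ?P = "PiM I (\<lambda>_. Q)"
  have "(\<Sum>j\<in>I. \<integral>x. g (x i) * g (x j) \<partial>?P)
      = (\<integral>x. (g (x i))\<^sup>2 \<partial>?P) + (\<Sum>j\<in>I - {i}. \<integral>x. g (x i) * g (x j) \<partial>?P)"
    using I i by (simp add: sum.remove power2_eq_square)
  also have "(\<integral>x. (g (x i))\<^sup>2 \<partial>?P) = (\<integral>y. (g y)\<^sup>2 \<partial>Q)"
    using i g by (intro integral_PiM_component[OF Q]) auto
  also have "(\<Sum>j\<in>I - {i}. \<integral>x. g (x i) * g (x j) \<partial>?P) = (\<Sum>j\<in>I - {i}. (\<integral>y. g y \<partial>Q)\<^sup>2)"
    using i by (intro sum.cong refl) (auto simp: integral_PiM_two_components[OF Q I] g power2_eq_square)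
  finally have "(\<Sum>j\<in>I. \<integral>x. g (x i) * g (x j) \<partial>?P) =
      (\<integral>y. (g y)\<^sup>2 \<partial>Q) + real (card (I - {i})) * (\<integral>y. g y \<partial>Q)\<^sup>2"
    by simp
  moreover have "0 < card I"
    using I i card_gt_0_iff by blast
  ultimately show ?thesis
    using I i by (simp add: card_Diff_singleton of_nat_diff)
qed

lemma
  fixes g :: "'a \<Rightarrow> real"
  assumes Q: "prob_space Q" and I: "finite I" and g[measurable]: "g \<in> borel_measurable Q"
    and bound: "AE y in Q. \<bar>g y\<bar> \<le> B"
  shows integrable_PiM_sum_iid: "integrable (PiM I (\<lambda>_. Q)) (\<lambda>x. \<Sum>i\<in>I. g (x i))"
    and integrable_PiM_sum_sq_iid: "integrable (PiM I (\<lambda>_. Q)) (\<lambda>x. (\<Sum>i\<in>I. g (x i))\<^sup>2)"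
    and integral_PiM_sum_iid: "(\<integral>x. (\<Sum>i\<in>I. g (x i)) \<partial>PiM I (\<lambda>_. Q)) = real (card I) * (\<integral>y. g y \<partial>Q)"
    and integral_PiM_sum_sq_iid: "(\<integral>x. (\<Sum>i\<in>I. g (x i))\<^sup>2 \<partial>PiM I (\<lambda>_. Q)) =
           real (card I) * (\<integral>y. (g y)\<^sup>2 \<partial>Q) + real (card I) * (real (card I) - 1) * (\<integral>y. g y \<partial>Q)\<^sup>2"
proof -
  interpret Q: prob_space Q by fact
  interpret P: prob_space "PiM I (\<lambda>_. Q)" by (simp add: Q prob_space_PiM)
  let ?P = "PiM I (\<lambda>_. Q)"
  have bound_P: "AE x in ?P. \<bar>g (x i)\<bar> \<le> B" if "i \<in> I" for i
    using Q that bound by (intro AE_PiM_component) auto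
  have int1: "integrable ?P (\<lambda>x. g (x i))" if "i \<in> I" for i
    using bound_P[OF that] that by (intro P.integrable_const_bound[where B=B]) auto
  have int2: "integrable ?P (\<lambda>x. g (x i) * g (x j))" if "i \<in> I" "j \<in> I" for i j
  proof (rule P.integrable_const_bound[where B="B * B"])
    show "AE x in ?P. norm (g (x i) * g (x j)) \<le> B * B"
      using bound_P[OF that(1)] bound_P[OF that(2)]
      by eventually_elim (auto simp: abs_mult intro: mult_mono')
  qed (use that in auto)
  have intQ: "integrable Q g"
    using bound by (intro Q.integrable_const_bound[where B=B]) auto
  have sq: "(\<Sum>i\<in>I. g (x i))\<^sup>2 = (\<Sum>i\<in>I. \<Sum>j\<in>I. g (x i) * g (x j))" for x
    by (simp add: power2_eq_square sum_product)
  show "integrable ?P (\<lambda>x. \<Sum>i\<in>I. g (x i))"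
    using int1 by auto
  show "integrable ?P (\<lambda>x. (\<Sum>i\<in>I. g (x i))\<^sup>2)"
    unfolding sq using int2 by auto
  show "(\<integral>x. (\<Sum>i\<in>I. g (x i)) \<partial>?P) = real (card I) * (\<integral>y. g y \<partial>Q)"
    using int1 by (simp add: integral_PiM_component[OF Q])
  have "(\<integral>x. (\<Sum>i\<in>I. g (x i))\<^sup>2 \<partial>?P) = (\<Sum>i\<in>I. \<Sum>j\<in>I. \<integral>x. g (x i) * g (x j) \<partial>?P)"
    unfolding sq using int2 by simp
  also have "\<dots> = real (card I) * ((\<integral>y. (g y)\<^sup>2 \<partial>Q) + (real (card I) - 1) * (\<integral>y. g y \<partial>Q)\<^sup>2)"
    using intQ by (simp add: sum_integral_PiM_products[OF Q I])
  finally show "(\<integral>x. (\<Sum>i\<in>I. g (x i))\<^sup>2 \<partial>?P) =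
      real (card I) * (\<integral>y. (g y)\<^sup>2 \<partial>Q) + real (card I) * (real (card I) - 1) * (\<integral>y. g y \<partial>Q)\<^sup>2"
    by (simp add: algebra_simps)
qed

lemma variance_PiM_scaled_sum_iid:
  fixes g :: "'a \<Rightarrow> real"
  assumes Q: "prob_space Q" and I: "finite I" and g: "g \<in> borel_measurable Q"
    and bound: "AE y in Q. \<bar>g y\<bar> \<le> B"
  defines "P \<equiv> PiM I (\<lambda>_. Q)"
  shows "(\<integral>x. (c * (\<Sum>i\<in>I. g (x i)) - (\<integral>x'. c * (\<Sum>i\<in>I. g (x' i)) \<partial>P))\<^sup>2 \<partial>P) =
           c\<^sup>2 * real (card I) * ((\<integral>y. (g y)\<^sup>2 \<partial>Q) - (\<integral>y. g y \<partial>Q)\<^sup>2)"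
proof -
  interpret P: prob_space P unfolding P_def by (simp add: Q prob_space_PiM)
  note sum_facts = integrable_PiM_sum_iid[OF Q I g bound] integrable_PiM_sum_sq_iid[OF Q I g bound]
    integral_PiM_sum_iid[OF Q I g bound] integral_PiM_sum_sq_iid[OF Q I g bound]
  note sum_facts = sum_facts[folded P_def]
  have "P.variance (\<lambda>x. c * (\<Sum>i\<in>I. g (x i))) =
      P.expectation (\<lambda>x. (c * (\<Sum>i\<in>I. g (x i)))\<^sup>2) - (P.expectation (\<lambda>x. c * (\<Sum>i\<in>I. g (x i))))\<^sup>2"
    using sum_facts by (intro P.variance_eq) (auto simp: power_mult_distrib)
  also have "\<dots> = c\<^sup>2 * real (card I) * ((\<integral>y. (g y)\<^sup>2 \<partial>Q) - (\<integral>y. g y \<partial>Q)\<^sup>2)"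
    by (simp add: power_mult_distrib sum_facts(3,4)) (simp add: algebra_simps power2_eq_square)
  finally show ?thesis .
qed

lemma integral_sub_integral_sq_le:
  fixes f :: "'a \<Rightarrow> real"
  assumes "prob_space \<mu>" "integrable \<mu> f" "integrable \<mu> (\<lambda>x. (f x)\<^sup>2)"
  shows "(\<integral>x. f x \<partial>\<mu>) - (\<integral>x. (f x)\<^sup>2 \<partial>\<mu>) \<le> 1 / 4"
proof -
  interpret prob_space \<mu> by fact
  have "f x - (f x)\<^sup>2 \<le> 1 / 4" for x
    using zero_le_power2[of "f x - 1 / 2"] by (simp add: power2_eq_square algebra_simps)
  then have "(\<integral>x. f x - (f x)\<^sup>2 \<partial>\<mu>) \<le> (\<integral>x. 1 / 4 \<partial>\<mu>)"
    using assms(2,3) by (intro integral_mono) auto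
  then show ?thesis
    using assms(2,3) by (simp add: prob_space)
qed

section \<open>Two-stage Bernoulli sampling\<close>

definition bernoulli_trials :: "nat \<Rightarrow> real \<Rightarrow> (nat \<Rightarrow> bool) measure" where
  "bernoulli_trials N q = (\<Pi>\<^sub>M s\<in>{..<N}. measure_pmf (bernoulli_pmf q))"

definition success_count :: "nat \<Rightarrow> (nat \<Rightarrow> bool) \<Rightarrow> real" where
  "success_count N X = (\<Sum>s<N. of_bool (X s))"

lemma sets_bernoulli_trials:
  "sets (bernoulli_trials N q) = sets (\<Pi>\<^sub>M s\<in>{..<N}. count_space UNIV)"
  unfolding bernoulli_trials_def by (intro sets_PiM_cong) simp_all

lemma prob_space_bernoulli_trials: "prob_space (bernoulli_trials N q)"
  unfolding bernoulli_trials_def by (intro prob_space_PiM prob_space_measure_pmf)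

lemma emeasure_bernoulli_trials:
  assumes A: "A \<in> sets (\<Pi>\<^sub>M s\<in>{..<N}. count_space UNIV)"
  shows "emeasure (bernoulli_trials N q) A = (\<Sum>X\<in>A. \<Prod>s<N. ennreal (pmf (bernoulli_pmf q) (X s)))"
proof -
  interpret product_sigma_finite "\<lambda>_. measure_pmf (bernoulli_pmf q)"
    unfolding product_sigma_finite_def by (simp add: sigma_finite_measure_count_space_finite
        prob_space_imp_sigma_finite prob_space_measure_pmf)
  have "A \<subseteq> space (\<Pi>\<^sub>M s\<in>{..<N}. count_space (UNIV :: bool set))"
    using sets.sets_into_space[OF A] .
  then have A_sub: "A \<subseteq> {..<N} \<rightarrow>\<^sub>E UNIV"
    by (simp add: space_PiM)
  then have "finite A"
    by (rule finite_subset) (simp add: finite_PiE)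
  have singleton: "{X} = (\<Pi>\<^sub>E s\<in>{..<N}. {X s})" if "X \<in> A" for X
    using that A_sub by (auto simp: PiE_iff extensional_def fun_eq_iff)
  have "emeasure (bernoulli_trials N q) A = (\<Sum>X\<in>A. emeasure (bernoulli_trials N q) {X})"
    using \<open>finite A\<close>
    by (rule emeasure_eq_sum_singleton) (auto simp: singleton bernoulli_trials_def intro!: sets_PiM_I_finite)
  also have "\<dots> = (\<Sum>X\<in>A. \<Prod>s<N. ennreal (pmf (bernoulli_pmf q) (X s)))"
    by (intro sum.cong refl) (simp add: singleton bernoulli_trials_def emeasure_PiM emeasure_pmf_single)
  finally show ?thesis .
qed

lemma borel_measurable_pmf_bernoulli[measurable]:
  assumes [measurable]: "p \<in> borel_measurable M"
  shows "(\<lambda>x. pmf (bernoulli_pmf (p x)) b) \<in> borel_measurable M"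
  by (simp add: bernoulli_pmf.rep_eq)

lemma measurable_bernoulli_trials:
  assumes [measurable]: "p \<in> borel_measurable M"
  shows "(\<lambda>x. bernoulli_trials N (p x)) \<in> measurable M (subprob_algebra (\<Pi>\<^sub>M s\<in>{..<N}. count_space UNIV))"
proof (rule measurable_subprob_algebra)
  fix x
  show "subprob_space (bernoulli_trials N (p x))"
    by (rule prob_space_imp_subprob_space[OF prob_space_bernoulli_trials])
  show "sets (bernoulli_trials N (p x)) = sets (\<Pi>\<^sub>M s\<in>{..<N}. count_space UNIV)"
    by (rule sets_bernoulli_trials)
next
  fix A assume A: "A \<in> sets (\<Pi>\<^sub>M s\<in>{..<N}. count_space (UNIV :: bool set))"
  show "(\<lambda>x. emeasure (bernoulli_trials N (p x)) A) \<in> borel_measurable M"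
    unfolding emeasure_bernoulli_trials[OF A] by measurable
qed

lemma
  fixes q :: real
  defines "p \<equiv> pmf (bernoulli_pmf q) True"
  shows integral_success_count: "(\<integral>X. success_count N X \<partial>bernoulli_trials N q) = N * p"
    and integral_success_count_sq:
      "(\<integral>X. (success_count N X)\<^sup>2 \<partial>bernoulli_trials N q) = N * p + N * (real N - 1) * p\<^sup>2"
proof -
  let ?B = "measure_pmf (bernoulli_pmf q)"
  have indicator: "(\<integral>b. (of_bool b :: real) \<partial>?B) = p"
    unfolding p_def by (subst integral_measure_pmf[of UNIV]) (auto simp: UNIV_bool)
  moreover have "(\<lambda>b. (of_bool b :: real)\<^sup>2) = of_bool"
    by (simp add: fun_eq_iff)
  ultimately have indicator_sq: "(\<integral>b. (of_bool b :: real)\<^sup>2 \<partial>?B) = p"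
    by simp
  have mean: "(\<integral>X. (\<Sum>s\<in>{..<N}. of_bool (X s)) \<partial>PiM {..<N} (\<lambda>_. ?B)) = card {..<N} * (\<integral>b. of_bool b \<partial>?B)"
    by (rule integral_PiM_sum_iid[where B=1]) (auto simp: prob_space_measure_pmf)
  have square: "(\<integral>X. (\<Sum>s\<in>{..<N}. of_bool (X s))\<^sup>2 \<partial>PiM {..<N} (\<lambda>_. ?B)) =
      card {..<N} * (\<integral>b. (of_bool b)\<^sup>2 \<partial>?B) + real (card {..<N}) * (real (card {..<N}) - 1) * (\<integral>b. of_bool b \<partial>?B)\<^sup>2"
    by (rule integral_PiM_sum_sq_iid[where B=1]) (auto simp: prob_space_measure_pmf)
  show "(\<integral>X. success_count N X \<partial>bernoulli_trials N q) = N * p"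
    using mean by (simp add: success_count_def bernoulli_trials_def indicator)
  show "(\<integral>X. (success_count N X)\<^sup>2 \<partial>bernoulli_trials N q) = N * p + N * (real N - 1) * p\<^sup>2"
    using square by (simp add: success_count_def bernoulli_trials_def indicator indicator_sq)
qed

lemma success_count_nonneg: "0 \<le> success_count N X"
  unfolding success_count_def by (simp add: sum_nonneg)

lemma success_count_le: "success_count N X \<le> N"
  unfolding success_count_def using sum_mono[of "{..<N}" "\<lambda>s. of_bool (X s)" "\<lambda>_. 1 :: real"] by simp

lemma borel_measurable_success_count[measurable]:
  "success_count N \<in> borel_measurable (\<Pi>\<^sub>M s\<in>{..<N}. count_space UNIV)"
  unfolding success_count_def by measurable

definition block_kernel ::
    "(complex^'d^'d \<Rightarrow> complex^'d^'d) \<Rightarrow> complex^'d \<Rightarrow> nat \<Rightarrow> complex^'d^'d \<Rightarrow>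
       ((complex^'d^'d) \<times> (nat \<Rightarrow> bool)) measure" where
  "block_kernel E z N V = distr (bernoulli_trials N (fid E (V *v z))) (block_space N) (\<lambda>X. (V, X))"

lemma block_law_eq_bind: "block_law E z N \<nu> = \<nu> \<bind> block_kernel E z N"
  unfolding block_law_def block_kernel_def bernoulli_trials_def ..

lemma measurable_Pair_bernoulli_trials:
  "(\<lambda>X. (V, X)) \<in> measurable (bernoulli_trials N q) (block_space N)"
  unfolding block_space_def
  by (rule measurable_Pair[OF measurable_const measurable_ident_sets[OF sets_bernoulli_trials]]) simp

lemma prob_space_block_kernel: "prob_space (block_kernel E z N V)"
  unfolding block_kernel_def
  by (rule prob_space.prob_space_distr[OF prob_space_bernoulli_trials measurable_Pair_bernoulli_trials])

lemma measurable_block_kernel: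
  fixes \<nu> :: "(complex^'d^'d) measure"
  assumes "quantum_channel E" "sets \<nu> = sets borel"
  shows "block_kernel E z N \<in> measurable \<nu> (subprob_algebra (block_space N))"
  unfolding block_kernel_def
proof (rule measurable_distr2[where f="\<lambda>V X. (V, X)" and M="\<Pi>\<^sub>M s\<in>{..<N}. count_space UNIV"])
  show "(\<lambda>V. bernoulli_trials N (fid E (V *v z))) \<in> measurable \<nu> (subprob_algebra (\<Pi>\<^sub>M s\<in>{..<N}. count_space UNIV))"
    by (intro measurable_bernoulli_trials borel_measurable_fid_mult_vec assms)
  have "(\<lambda>x. x) \<in> measurable (\<nu> \<Otimes>\<^sub>M (\<Pi>\<^sub>M s\<in>{..<N}. count_space UNIV)) (block_space N)"
    unfolding block_space_def by (rule measurable_ident_sets) (rule sets_pair_measure_cong[OF assms(2) refl])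
  then show "(\<lambda>(V, X). (V, X)) \<in> measurable (\<nu> \<Otimes>\<^sub>M (\<Pi>\<^sub>M s\<in>{..<N}. count_space UNIV)) (block_space N)"
    by (simp add: case_prod_Pair_iden)
qed

lemma
  fixes \<nu> :: "(complex^'d^'d) measure"
  assumes "quantum_channel E" "prob_space \<nu>" "sets \<nu> = sets borel"
  shows prob_space_block_law: "prob_space (block_law E z N \<nu>)"
    and sets_block_law: "sets (block_law E z N \<nu>) = sets (block_space N)"
proof -
  note kernel = measurable_block_kernel[OF assms(1,3)]
  show "prob_space (block_law E z N \<nu>)"
    unfolding block_law_eq_bind
    by (rule prob_space_bind'[OF _ measurable_prob_algebraI[OF prob_space_block_kernel kernel]])
      (simp add: space_prob_algebra assms(2))
  show "sets (block_law E z N \<nu>) = sets (block_space N)"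
    unfolding block_law_eq_bind by (rule sets_bind_measurable[OF kernel prob_space.not_empty[OF assms(2)]])
qed

lemma integral_block_law:
  fixes \<nu> :: "(complex^'d^'d) measure" and h :: "(nat \<Rightarrow> bool) \<Rightarrow> real"
  assumes "quantum_channel E" "prob_space \<nu>" "sets \<nu> = sets borel"
    and h: "h \<in> borel_measurable (\<Pi>\<^sub>M s\<in>{..<N}. count_space UNIV)" and bound: "\<And>X. \<bar>h X\<bar> \<le> B"
  shows "(\<integral>\<omega>. h (snd \<omega>) \<partial>block_law E z N \<nu>) = (\<integral>V. (\<integral>X. h X \<partial>bernoulli_trials N (fid E (V *v z))) \<partial>\<nu>)"
proof -
  note kernel = measurable_block_kernel[OF assms(1,3)]
  have h_snd: "(\<lambda>\<omega>. h (snd \<omega>)) \<in> borel_measurable (block_space N)"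
    unfolding block_space_def using h by measurable
  have "(\<integral>\<omega>. h (snd \<omega>) \<partial>block_law E z N \<nu>) = (\<integral>V. (\<integral>\<omega>. h (snd \<omega>) \<partial>block_kernel E z N V) \<partial>\<nu>)"
    unfolding block_law_eq_bind
    by (rule integral_bind[OF h_snd _ kernel, where B=B and B'=1])
      (auto simp: bound prob_space.finite_measure assms(2) prob_space.emeasure_space_1 prob_space_block_kernel)
  also have "\<dots> = (\<integral>V. (\<integral>X. h X \<partial>bernoulli_trials N (fid E (V *v z))) \<partial>\<nu>)"
    unfolding block_kernel_def by (simp add: integral_distr[OF measurable_Pair_bernoulli_trials h_snd])
  finally show ?thesis .
qed

lemma
  fixes \<nu> :: "(complex^'d^'d) measure"
  assumes E: "quantum_channel E" and \<nu>: "unitary_measure \<nu>" and z: "norm z = 1"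
  shows integral_block_law_success_count:
      "(\<integral>\<omega>. success_count N (snd \<omega>) \<partial>block_law E z N \<nu>) = N * (\<integral>V. fid E (V *v z) \<partial>\<nu>)"
    and integral_block_law_success_count_sq:
      "(\<integral>\<omega>. (success_count N (snd \<omega>))\<^sup>2 \<partial>block_law E z N \<nu>) =
         N * (\<integral>V. fid E (V *v z) \<partial>\<nu>) + N * (real N - 1) * (\<integral>V. (fid E (V *v z))\<^sup>2 \<partial>\<nu>)"
proof -
  have \<nu>': "prob_space \<nu>" "sets \<nu> = sets borel"
    using \<nu> by (simp_all add: unitary_measure_def)
  have pmf_fid: "AE V in \<nu>. pmf (bernoulli_pmf (fid E (V *v z))) True = fid E (V *v z)"
    using AE_fid_mult_vec_bounds[OF E \<nu> z] by eventually_elim simp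
  have f[measurable]: "(\<lambda>V. fid E (V *v z)) \<in> borel_measurable \<nu>"
    using E \<nu>'(2) by (rule borel_measurable_fid_mult_vec)
  have "(\<integral>\<omega>. success_count N (snd \<omega>) \<partial>block_law E z N \<nu>) =
      (\<integral>V. (\<integral>X. success_count N X \<partial>bernoulli_trials N (fid E (V *v z))) \<partial>\<nu>)"
    using success_count_nonneg success_count_le
    by (intro integral_block_law[OF E \<nu>', where B=N]) (auto simp: abs_le_iff)
  also have "\<dots> = (\<integral>V. N * pmf (bernoulli_pmf (fid E (V *v z))) True \<partial>\<nu>)"
    by (simp add: integral_success_count)
  also have "\<dots> = (\<integral>V. N * fid E (V *v z) \<partial>\<nu>)"
    using pmf_fid f by (intro integral_cong_AE) (auto elim!: eventually_mono)
  finally show "(\<integral>\<omega>. success_count N (snd \<omega>) \<partial>block_law E z N \<nu>) = N * (\<integral>V. fid E (V *v z) \<partial>\<nu>)"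
    by simp
  have "(\<integral>\<omega>. (success_count N (snd \<omega>))\<^sup>2 \<partial>block_law E z N \<nu>) =
      (\<integral>V. (\<integral>X. (success_count N X)\<^sup>2 \<partial>bernoulli_trials N (fid E (V *v z))) \<partial>\<nu>)"
    using success_count_nonneg success_count_le
    by (intro integral_block_law[OF E \<nu>', where B="N\<^sup>2"]) (auto simp: abs_le_iff power_mono)
  also have "\<dots> = (\<integral>V. N * pmf (bernoulli_pmf (fid E (V *v z))) True
      + N * (real N - 1) * (pmf (bernoulli_pmf (fid E (V *v z))) True)\<^sup>2 \<partial>\<nu>)"
    by (simp add: integral_success_count_sq)
  also have "\<dots> = (\<integral>V. N * fid E (V *v z) + N * (real N - 1) * (fid E (V *v z))\<^sup>2 \<partial>\<nu>)"
    using pmf_fid f by (intro integral_cong_AE) (auto elim!: eventually_mono)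
  finally show "(\<integral>\<omega>. (success_count N (snd \<omega>))\<^sup>2 \<partial>block_law E z N \<nu>) =
      N * (\<integral>V. fid E (V *v z) \<partial>\<nu>) + N * (real N - 1) * (\<integral>V. (fid E (V *v z))\<^sup>2 \<partial>\<nu>)"
    using integrable_fid_mult_vec[OF E \<nu> z] integrable_fid_mult_vec_sq[OF E \<nu> z] by simp
qed

lemma variance_Fhat:
  fixes \<nu> :: "(complex^'d^'d) measure"
  assumes E: "quantum_channel E" and \<nu>: "unitary_measure \<nu>" and z: "norm z = 1"
    and "0 < M" "0 < N"
  defines "P \<equiv> data_law E z M N \<nu>"
    and "F \<equiv> \<integral>V. fid E (V *v z) \<partial>\<nu>" and "S \<equiv> \<integral>V. (fid E (V *v z))\<^sup>2 \<partial>\<nu>"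
  shows "(\<integral>\<omega>. (Fhat M N \<omega> - (\<integral>\<omega>'. Fhat M N \<omega>' \<partial>P))\<^sup>2 \<partial>P) = (S - F\<^sup>2) / M + (F - S) / (M * N)"
proof -
  have \<nu>': "prob_space \<nu>" "sets \<nu> = sets borel"
    using \<nu> by (simp_all add: unitary_measure_def)
  define Q where "Q = block_law E z N \<nu>"
  have Q: "prob_space Q"
    unfolding Q_def using E \<nu>' by (rule prob_space_block_law)
  have count_measurable: "(\<lambda>\<omega>. success_count N (snd \<omega>)) \<in> borel_measurable Q"
    unfolding Q_def measurable_cong_sets[OF sets_block_law[OF E \<nu>'] refl] block_space_def by measurable
  have count_bound: "AE \<omega> in Q. \<bar>success_count N (snd \<omega>)\<bar> \<le> N"
    by (simp add: success_count_nonneg success_count_le)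
  have Fhat_eq: "Fhat M N = (\<lambda>\<omega>. 1 / (M * N) * (\<Sum>i\<in>{..<M}. success_count N (snd (\<omega> i))))"
    by (simp add: fun_eq_iff Fhat_def success_count_def)
  have "(\<integral>\<omega>. (Fhat M N \<omega> - (\<integral>\<omega>'. Fhat M N \<omega>' \<partial>P))\<^sup>2 \<partial>P) =
      (1 / (M * N))\<^sup>2 * card {..<M} *
        ((\<integral>\<omega>. (success_count N (snd \<omega>))\<^sup>2 \<partial>Q) - (\<integral>\<omega>. success_count N (snd \<omega>) \<partial>Q)\<^sup>2)"
    unfolding P_def data_law_def Q_def[symmetric] Fhat_eq
    by (rule variance_PiM_scaled_sum_iid[OF Q finite_lessThan count_measurable count_bound])
  also have "\<dots> = (S - F\<^sup>2) / M + (F - S) / (M * N)"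
    unfolding Q_def integral_block_law_success_count[OF E \<nu> z] integral_block_law_success_count_sq[OF E \<nu> z]
      F_def[symmetric] S_def[symmetric]
    using assms(4,5) by (simp add: field_simps power2_eq_square)
  finally show ?thesis .
qed

theorem proposition7:
  fixes E :: "complex^'d^'d \<Rightarrow> complex^'d^'d"
    and H \<nu> :: "(complex^'d^'d) measure"
    and z0 :: "complex^'d"
    and M N :: nat
  assumes "quantum_channel E"
    and "is_haar H"
    and "norm z0 = 1"
    and "unitary_design 4 H \<nu>"
    and "M \<ge> 2" and "N \<ge> 2"
  defines "F \<equiv> (\<integral>\<psi>. fid E \<psi> \<partial>state_measure H z0)"
    and "D2 \<equiv> (\<integral>\<psi>. (fid E \<psi>)\<^sup>2 \<partial>state_measure H z0) - (\<integral>\<psi>. fid E \<psi> \<partial>state_measure H z0)\<^sup>2"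
    and "P \<equiv> data_law E z0 M N \<nu>"
  shows "(\<integral>\<omega>. (Fhat M N \<omega> - (\<integral>\<omega>'. Fhat M N \<omega>' \<partial>P))\<^sup>2 \<partial>P)
           = D2 / real M + (F - (\<integral>\<psi>. (fid E \<psi>)\<^sup>2 \<partial>state_measure H z0)) / (real M * real N)
       \<and> (\<integral>\<omega>. (Fhat M N \<omega> - (\<integral>\<omega>'. Fhat M N \<omega>' \<partial>P))\<^sup>2 \<partial>P) \<le> D2 / real M + 1 / (4 * real M * real N)"
proof -
  note E = assms(1) and z0 = assms(3) and design = assms(4)
  have H: "unitary_measure H" using assms(2) by (rule is_haar_imp_unitary_measure)
  have \<nu>: "unitary_measure \<nu>" using design by (rule unitary_design_imp_unitary_measure)
  define S where "S = (\<integral>\<psi>. (fid E \<psi>)\<^sup>2 \<partial>state_measure H z0)"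
  have F_\<nu>: "(\<integral>V. fid E (V *v z0) \<partial>\<nu>) = F"
    unfolding F_def using E design H by (rule unitary_design_integral_fid) simp
  have S_\<nu>: "(\<integral>V. (fid E (V *v z0))\<^sup>2 \<partial>\<nu>) = S"
    unfolding S_def using E design H by (rule unitary_design_integral_fid_sq) simp
  have variance: "(\<integral>\<omega>. (Fhat M N \<omega> - (\<integral>\<omega>'. Fhat M N \<omega>' \<partial>P))\<^sup>2 \<partial>P) = D2 / M + (F - S) / (M * N)"
    using variance_Fhat[OF E \<nu> z0, of M N] assms(5,6)
    unfolding P_def D2_def F_\<nu> S_\<nu> by (simp add: F_def S_def)
  have "prob_space \<nu>"
    using \<nu> by (simp add: unitary_measure_def)
  from integral_sub_integral_sq_le[OF this integrable_fid_mult_vec[OF E \<nu> z0] integrable_fid_mult_vec_sq[OF E \<nu> z0]]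
  have "F - S \<le> 1 / 4"
    unfolding F_\<nu> S_\<nu> .
  then have "(F - S) / (M * N) \<le> (1 / 4) / (M * N)"
    by (rule divide_right_mono) simp
  with variance show ?thesis
    by (simp add: S_def)
qed

end
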